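(* Let $0\le\delta,\epsilon<1$, integers $d\ge0$, $n>0$, $m>1$, let $\psi_{AB}$ be an $m$-dimensional noisy maximally entangled state, and let $P,Q\in\mathcal{H}_m^{\otimes n}$ satisfy $\|P\|'_2\le1$, $\|Q\|'_2\le1$, $\|P^{>d}\|'^2_2\le\delta$, $\|Q^{>d}\|'^2_2\le\delta$. Let $\mathcal{A}=\{\mathcal{A}_i\}$, $\mathcal{B}=\{\mathcal{B}_i\}$ be standard orthonormal bases of $\mathcal{M}_m$ with $\mathrm{Tr}((\mathcal{A}_i\otimes\mathcal{B}_j)\psi_{AB})=c_i\delta_{i,j}$ for $i,j\in\{0,\ldots,m^2-1\}$, where $c_0\ge c_1\ge\cdots\ge c_{m^2-1}\ge0$ are the singular values of the correlation matrix, and write $P=\sum_\sigma\widehat P(\sigma)\mathcal{A}_\sigma$, $Q=\sum_\sigma\widehat Q(\sigma)\mathcal{B}_\sigma$. Then there is a set $H\subseteq[n]$ with $h=|H|\le\frac{2d}{\epsilon}$ such that $\mathrm{Inf}_i(P^{\le d})\le\epsilon$ and $\mathrm{Inf}_i(Q^{\le d})\le\epsilon$ for all $i\notin H$, and $$\mathrm{Tr}((P\otimes Q)\psi_{AB}^{\otimes n})=\sum_{\sigma\in\{0,\ldots,m^2-1\}^H}c_\sigma\,\mathrm{Tr}((P_\sigma\otimes Q_\sigma)\psi_{AB}^{\otimes(n-h)}),$$ where $c_\sigma=\prod_{i\in H}c_{\sigma_i}$, $P_\sigma=\sum_{\tau:\tau_H=\sigma}\widehat P(\tau)\mathcal{A}_{\tau_{H^c}}$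 and $Q_\sigma=\sum_{\tau:\tau_H=\sigma}\widehat Q(\tau)\mathcal{B}_{\tau_{H^c}}$ (operators on the registers in $H^c=[n]\setminus H$).
   Context: A standard orthonormal basis of $\mathcal{M}_m$ is an orthonormal basis (w.r.t. $\frac1m\mathrm{Tr}X^\dagger Y$) of Hermitian matrices with $\mathcal{B}_0=\mathrm{id}_m$; for $\sigma\in\{0,\ldots,m^2-1\}^n$, $\mathcal{B}_\sigma=\bigotimes_i\mathcal{B}_{\sigma_i}$, $|\sigma|=|\{i:\sigma_i\ne0\}|$, and $\tau_H$ denotes the restriction of $\tau$ to coordinates in $H$. Such bases with diagonal correlation exist. $\|X\|'_2=(\frac1{m^n}\mathrm{Tr}X^\dagger X)^{1/2}$. For $X=\sum_\sigma\widehat X(\sigma)\mathcal{B}_\sigma$: $X^{\le d}=\sum_{|\sigma|\le d}\widehat X(\sigma)\mathcal{B}_\sigma$, $X^{>d}=\sum_{|\sigma|>d}\widehat X(\sigma)\mathcal{B}_\sigma$, and $\mathrm{Inf}_i(X)=\sum_{\sigma:\sigma_i\ne0}|\widehat X(\sigma)|^2$ (all basis-independent). A noisy maximally entangled state is a state on $\mathbb{C}^m\otimes\mathbb{C}^m$ with maximally mixed marginals and maximal correlation $\rho(\psi_{AB})=\sup\{|\mathrm{Tr}((P^\dagger\otimes Q)\psi_{AB})|:\mathrm{Tr}P=\mathrm{Tr}Q=0,\ \tfrac1m\mathrm{Tr}P^\dagger P=\tfrac1m\mathrm{Tr}Q^\dagger Q=1\}<1$. *)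

theory Defs
  imports "HOL-Analysis.Analysis"
begin

text \<open>A single-site matrix in M_m is a function nat => nat => complex,
  meaningful on indices below m.  An operator on the registers S (a finite set of
  natural numbers, each register being C^m) is a function
  (nat => nat) => (nat => nat) => complex whose arguments are index tuples,
  i.e. elements of tuples S m (extensional functions S -> {..<m}).
  A state on C^m (x) C^m is a function (nat*nat) => (nat*nat) => complex.\<close>

type_synonym mat1 = "nat \<Rightarrow> nat \<Rightarrow> complex"
type_synonym opr = "(nat \<Rightarrow> nat) \<Rightarrow> (nat \<Rightarrow> nat) \<Rightarrow> complex"
type_synonym state2 = "nat \<times> nat \<Rightarrow> nat \<times> nat \<Rightarrow> complex"

definition tuples :: "nat set \<Rightarrow> nat \<Rightarrow> (nat \<Rightarrow> nat) set" where
  "tuples S k = PiE S (\<lambda>_. {..<k})"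

definition herm_op :: "nat \<Rightarrow> nat set \<Rightarrow> opr \<Rightarrow> bool" where
  "herm_op m S X \<longleftrightarrow> (\<forall>x\<in>tuples S m. \<forall>y\<in>tuples S m. X y x = cnj (X x y))"

definition norm2sq :: "nat \<Rightarrow> nat set \<Rightarrow> opr \<Rightarrow> real" where
  "norm2sq m S X = (1 / real m ^ card S) *
     (\<Sum>x\<in>tuples S m. \<Sum>y\<in>tuples S m. (cmod (X x y))\<^sup>2)"

definition std_onb :: "nat \<Rightarrow> (nat \<Rightarrow> mat1) \<Rightarrow> bool" where
  "std_onb m B \<longleftrightarrow>
     (\<forall>a<m. \<forall>b<m. B 0 a b = (if a = b then 1 else 0)) \<and>
     (\<forall>i<m^2. \<forall>a<m. \<forall>b<m. B i b a = cnj (B i a b)) \<and>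
     (\<forall>i<m^2. \<forall>j<m^2. (1 / of_nat m) * (\<Sum>a<m. \<Sum>b<m. cnj (B i a b) * B j a b)
                         = (if i = j then 1 else 0))"

definition basis_op :: "(nat \<Rightarrow> mat1) \<Rightarrow> nat set \<Rightarrow> (nat \<Rightarrow> nat) \<Rightarrow> opr" where
  "basis_op B S \<sigma> = (\<lambda>x y. \<Prod>i\<in>S. B (\<sigma> i) (x i) (y i))"

definition fcoeff :: "nat \<Rightarrow> (nat \<Rightarrow> mat1) \<Rightarrow> nat set \<Rightarrow> opr \<Rightarrow> (nat \<Rightarrow> nat) \<Rightarrow> complex" where
  "fcoeff m B S X \<sigma> = (1 / of_nat m ^ card S) *
     (\<Sum>x\<in>tuples S m. \<Sum>y\<in>tuples S m. cnj (basis_op B S \<sigma> x y) * X x y)"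

definition wt :: "nat set \<Rightarrow> (nat \<Rightarrow> nat) \<Rightarrow> nat" where
  "wt S \<sigma> = card {i\<in>S. \<sigma> i \<noteq> 0}"

definition low_part :: "nat \<Rightarrow> (nat \<Rightarrow> mat1) \<Rightarrow> nat set \<Rightarrow> nat \<Rightarrow> opr \<Rightarrow> opr" where
  "low_part m B S d X = (\<lambda>x y. \<Sum>\<sigma>\<in>{\<sigma>\<in>tuples S (m^2). wt S \<sigma> \<le> d}.
       fcoeff m B S X \<sigma> * basis_op B S \<sigma> x y)"

definition high_part :: "nat \<Rightarrow> (nat \<Rightarrow> mat1) \<Rightarrow> nat set \<Rightarrow> nat \<Rightarrow> opr \<Rightarrow> opr" where
  "high_part m B S d X = (\<lambda>x y. \<Sum>\<sigma>\<in>{\<sigma>\<in>tuples S (m^2). wt S \<sigma> > d}.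
       fcoeff m B S X \<sigma> * basis_op B S \<sigma> x y)"

definition influence :: "nat \<Rightarrow> (nat \<Rightarrow> mat1) \<Rightarrow> nat set \<Rightarrow> opr \<Rightarrow> nat \<Rightarrow> real" where
  "influence m B S X i = (\<Sum>\<sigma>\<in>{\<sigma>\<in>tuples S (m^2). \<sigma> i \<noteq> 0}. (cmod (fcoeff m B S X \<sigma>))\<^sup>2)"

text \<open>Tr((P (x) Q) psi^{(x) S}): P acts on the A-registers in S, Q on the B-registers in S.\<close>
definition corr :: "nat \<Rightarrow> nat set \<Rightarrow> opr \<Rightarrow> opr \<Rightarrow> state2 \<Rightarrow> complex" where
  "corr m S P Q \<psi> = (\<Sum>x\<in>tuples S m. \<Sum>x'\<in>tuples S m. \<Sum>y\<in>tuples S m. \<Sum>y'\<in>tuples S m.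
       P x x' * Q y y' * (\<Prod>i\<in>S. \<psi> (x' i, y' i) (x i, y i)))"

definition tr2 :: "nat \<Rightarrow> mat1 \<Rightarrow> mat1 \<Rightarrow> state2 \<Rightarrow> complex" where
  "tr2 m X Y \<psi> = (\<Sum>a<m. \<Sum>a'<m. \<Sum>b<m. \<Sum>b'<m. X a a' * Y b b' * \<psi> (a', b') (a, b))"

definition density2 :: "nat \<Rightarrow> state2 \<Rightarrow> bool" where
  "density2 m \<psi> \<longleftrightarrow>
     (\<forall>p\<in>{..<m}\<times>{..<m}. \<forall>q\<in>{..<m}\<times>{..<m}. \<psi> q p = cnj (\<psi> p q)) \<and>
     (\<forall>v :: nat \<times> nat \<Rightarrow> complex.
        let s = (\<Sum>p\<in>{..<m}\<times>{..<m}. \<Sum>q\<in>{..<m}\<times>{..<m}. cnj (v p) * \<psi> p q * v q)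
        in Im s = 0 \<and> Re s \<ge> 0) \<and>
     (\<Sum>p\<in>{..<m}\<times>{..<m}. \<psi> p p) = 1"

definition max_mixed_marginals :: "nat \<Rightarrow> state2 \<Rightarrow> bool" where
  "max_mixed_marginals m \<psi> \<longleftrightarrow>
     (\<forall>a<m. \<forall>a'<m. (\<Sum>b<m. \<psi> (a, b) (a', b)) = (if a = a' then 1 / of_nat m else 0)) \<and>
     (\<forall>b<m. \<forall>b'<m. (\<Sum>a<m. \<psi> (a, b) (a, b')) = (if b = b' then 1 / of_nat m else 0))"

definition maxcorr :: "nat \<Rightarrow> state2 \<Rightarrow> real" where
  "maxcorr m \<psi> = Sup {cmod (tr2 m (\<lambda>a a'. cnj (P a' a)) Q \<psi>) | P Q.
       (\<Sum>a<m. P a a) = 0 \<and> (\<Sum>a<m. Q a a) = 0 \<and>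
       (1 / real m) * (\<Sum>a<m. \<Sum>b<m. (cmod (P a b))\<^sup>2) = 1 \<and>
       (1 / real m) * (\<Sum>a<m. \<Sum>b<m. (cmod (Q a b))\<^sup>2) = 1}"

definition noisy_mes :: "nat \<Rightarrow> state2 \<Rightarrow> bool" where
  "noisy_mes m \<psi> \<longleftrightarrow> density2 m \<psi> \<and> max_mixed_marginals m \<psi> \<and> maxcorr m \<psi> < 1"

definition part_op :: "nat \<Rightarrow> (nat \<Rightarrow> mat1) \<Rightarrow> nat \<Rightarrow> nat set \<Rightarrow> opr \<Rightarrow> (nat \<Rightarrow> nat) \<Rightarrow> opr" where
  "part_op m B n H X \<sigma> = (\<lambda>x y. \<Sum>\<tau>\<in>{\<tau>\<in>tuples {..<n} (m^2). restrict \<tau> H = \<sigma>}.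
       fcoeff m B {..<n} X \<tau> * basis_op B ({..<n} - H) (restrict \<tau> ({..<n} - H)) x y)"

end

theory Submission
  imports Defs "Jordan_Normal_Form.Determinant"
begin

text \<open>Let H consist of the registers on which P^{\<le>d} or Q^{\<le>d} has influence
  exceeding \<epsilon>. By Parseval the total influence of X^{\<le>d} is the sum over \<sigma> of
  |\<sigma>| |hat X(\<sigma>)|^2, which is at most d ||X||^2 \<le> d; so by Markov's inequality each
  of the two sets of bad registers has at most d/\<epsilon> elements. The trace formula holds
  for every H: as the bases diagonalise the correlation, Tr((A_\<sigma> \<otimes> B_\<tau>) \<psi>^{\<otimes>n})
  vanishes unless \<sigma> = \<tau>, when it is c_\<sigma>. Hence both sides equal the sum over \<tau> of
  hat P(\<tau>) hat Q(\<tau>) c_\<tau>, the right-hand side with the terms grouped according to \<tau>_H.\<close>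

lemma sum_div_mod_square:
  fixes f :: "nat \<Rightarrow> nat \<Rightarrow> 'a::comm_monoid_add"
  shows "(\<Sum>p<m^2. f (p div m) (p mod m)) = (\<Sum>a<m. \<Sum>b<m. f a b)"
proof -
  have "(\<Sum>p<m^2. f (p div m) (p mod m)) = (\<Sum>p<m*m. f (p div m) (p mod m))"
    by (simp add: power2_eq_square)
  also have "\<dots> = (\<Sum>a<m. \<Sum>b<m. f ((b + a*m) div m) ((b + a*m) mod m))"
    by (rule sum_mult_product)
  also have "\<dots> = (\<Sum>a<m. \<Sum>b<m. f a b)"
    by (intro sum.cong refl) auto
  finally show ?thesis .
qed

lemma std_onb_orthonormal:
  assumes "std_onb m B" "i < m^2" "j < m^2"
  shows "(1 / of_nat m) * (\<Sum>a<m. \<Sum>b<m. cnj (B i a b) * B j a b) = (if i = j then 1 else 0)"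
  using assms unfolding std_onb_def by blast

text \<open>With U the m^2 \<times> m^2 matrix of the entries of the B_k and V = U^*/m,
  orthonormality says U V = 1; completeness is the statement V U = 1.\<close>
lemma orthonormal_matrices_complete:
  assumes orth: "\<And>i j. i < m^2 \<Longrightarrow> j < m^2 \<Longrightarrow>
      (1 / of_nat m) * (\<Sum>a<m. \<Sum>b<m. cnj (B i a b) * B j a b) = (if i = j then 1 else 0)"
    and ab: "a < m" "b < m" "a' < m" "b' < m"
  shows "(\<Sum>k<m^2. cnj (B k a b) * B k a' b') = (if a = a' \<and> b = b' then of_nat m else 0)"
proof -
  define U :: "complex mat" where "U = mat (m^2) (m^2) (\<lambda>(k, p). B k (p div m) (p mod m))"
  define V :: "complex mat" where
    "V = mat (m^2) (m^2) (\<lambda>(p, k). cnj (B k (p div m) (p mod m)) / of_nat m)"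
  have UV: "U * V = 1\<^sub>m (m^2)"
  proof (rule eq_matI)
    fix k l assume "k < dim_row (1\<^sub>m (m^2))" "l < dim_col (1\<^sub>m (m^2))"
    then have kl: "k < m^2" "l < m^2" by auto
    have "(U * V) $$ (k, l) = (\<Sum>p<m^2. B k (p div m) (p mod m) * (cnj (B l (p div m) (p mod m)) / of_nat m))"
      using kl by (simp add: U_def V_def scalar_prod_def atLeast0LessThan)
    also have "\<dots> = (\<Sum>a<m. \<Sum>b<m. B k a b * (cnj (B l a b) / of_nat m))"
      by (rule sum_div_mod_square)
    also have "\<dots> = (1 / of_nat m) * (\<Sum>a<m. \<Sum>b<m. cnj (B l a b) * B k a b)"
      by (simp add: sum_distrib_left mult_ac)
    finally show "(U * V) $$ (k, l) = 1\<^sub>m (m^2) $$ (k, l)"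
      using orth kl by auto
  qed (auto simp: U_def V_def)
  have VU: "V * U = 1\<^sub>m (m^2)"
    by (rule mat_mult_left_right_inverse[OF _ _ UV]) (auto simp: U_def V_def)
  have index_less: "y + x * m < m^2" if "x < m" "y < m" for x y
  proof -
    have "(x + 1) * m \<le> m * m" using that by (intro mult_le_mono1) simp
    then show ?thesis using that by (simp add: power2_eq_square)
  qed
  define p where "p = b + a * m"
  define q where "q = b' + a' * m"
  have pq: "p < m^2" "q < m^2" "p div m = a" "p mod m = b" "q div m = a'" "q mod m = b'"
    using ab index_less unfolding p_def q_def by auto
  have pq_eq_iff: "p = q \<longleftrightarrow> a = a' \<and> b = b'"
    using pq unfolding p_def q_def by metis
  have "(\<Sum>k<m^2. cnj (B k a b) / of_nat m * B k a' b') = (V * U) $$ (p, q)"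
    using pq by (simp add: U_def V_def scalar_prod_def atLeast0LessThan)
  also have "\<dots> = (if a = a' \<and> b = b' then 1 else 0)"
    using VU pq pq_eq_iff by simp
  finally have "(\<Sum>k<m^2. cnj (B k a b) / of_nat m * B k a' b') = (if a = a' \<and> b = b' then 1 else 0)" .
  moreover have "m > 0" using ab by simp
  ultimately show ?thesis
    by (simp add: sum_divide_distrib[symmetric] divide_eq_eq split: if_splits)
qed

lemma finite_tuples [simp]: "finite S \<Longrightarrow> finite (tuples S k)"
  by (simp add: tuples_def finite_PiE)

lemma tuples_less: "x \<in> tuples S k \<Longrightarrow> i \<in> S \<Longrightarrow> x i < k"
  unfolding tuples_def by auto

lemma tuples_eq_iff: "x \<in> tuples S k \<Longrightarrow> y \<in> tuples S k \<Longrightarrow> x = y \<longleftrightarrow> (\<forall>i\<in>S. x i = y i)"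
  unfolding tuples_def by (auto intro: PiE_ext)

lemma restrict_in_tuples: "\<tau> \<in> tuples N k \<Longrightarrow> H \<subseteq> N \<Longrightarrow> restrict \<tau> H \<in> tuples H k"
  by (auto simp: tuples_def)

lemma prod_sum_tuples:
  fixes f :: "nat \<Rightarrow> nat \<Rightarrow> 'a::comm_semiring_1"
  assumes "finite S"
  shows "(\<Prod>i\<in>S. \<Sum>a<k. f i a) = (\<Sum>x\<in>tuples S k. \<Prod>i\<in>S. f i (x i))"
  unfolding tuples_def using assms by (intro prod_sum_PiE) auto

lemma prod_if_all:
  fixes f :: "'b \<Rightarrow> 'a::comm_semiring_1"
  assumes "finite S"
  shows "(\<Prod>i\<in>S. if P i then f i else 0) = (if \<forall>i\<in>S. P i then \<Prod>i\<in>S. f i else 0)"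
  using assms by (induction S rule: finite_induct) auto

lemma basis_op_complete:
  assumes S: "finite S" and onb: "std_onb m B"
    and xy: "x \<in> tuples S m" "y \<in> tuples S m" "x' \<in> tuples S m" "y' \<in> tuples S m"
  shows "(\<Sum>\<sigma>\<in>tuples S (m^2). cnj (basis_op B S \<sigma> x y) * basis_op B S \<sigma> x' y')
         = (if x = x' \<and> y = y' then of_nat m ^ card S else 0)"
proof -
  have "(\<Sum>\<sigma>\<in>tuples S (m^2). cnj (basis_op B S \<sigma> x y) * basis_op B S \<sigma> x' y')
      = (\<Sum>\<sigma>\<in>tuples S (m^2). \<Prod>i\<in>S. cnj (B (\<sigma> i) (x i) (y i)) * B (\<sigma> i) (x' i) (y' i))"
    unfolding basis_op_def by (simp add: prod.distrib)
  also have "\<dots> = (\<Prod>i\<in>S. \<Sum>k<m^2. cnj (B k (x i) (y i)) * B k (x' i) (y' i))"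
    by (rule prod_sum_tuples[OF S, symmetric])
  also have "\<dots> = (\<Prod>i\<in>S. if x i = x' i \<and> y i = y' i then of_nat m else 0)"
    using orthonormal_matrices_complete[OF std_onb_orthonormal[OF onb]]
      tuples_less[OF xy(1)] tuples_less[OF xy(2)] tuples_less[OF xy(3)] tuples_less[OF xy(4)]
    by (intro prod.cong refl) auto
  also have "\<dots> = (if x = x' \<and> y = y' then of_nat m ^ card S else 0)"
    using xy by (simp add: prod_if_all[OF S] tuples_eq_iff ball_conj_distrib)
  finally show ?thesis .
qed

lemma fcoeff_basis_op:
  assumes S: "finite S" and onb: "std_onb m B"
    and st: "\<sigma> \<in> tuples S (m^2)" "\<tau> \<in> tuples S (m^2)"
  shows "fcoeff m B S (basis_op B S \<tau>) \<sigma> = (if \<sigma> = \<tau> then 1 else 0)"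
proof -
  have "(\<Sum>x\<in>tuples S m. \<Sum>y\<in>tuples S m. cnj (basis_op B S \<sigma> x y) * basis_op B S \<tau> x y)
     = (\<Sum>x\<in>tuples S m. \<Sum>y\<in>tuples S m. \<Prod>i\<in>S. cnj (B (\<sigma> i) (x i) (y i)) * B (\<tau> i) (x i) (y i))"
    unfolding basis_op_def by (simp add: prod.distrib)
  also have "\<dots> = (\<Sum>x\<in>tuples S m. \<Prod>i\<in>S. \<Sum>b<m. cnj (B (\<sigma> i) (x i) b) * B (\<tau> i) (x i) b)"
    by (intro sum.cong refl prod_sum_tuples[OF S, symmetric])
  also have "\<dots> = (\<Prod>i\<in>S. \<Sum>a<m. \<Sum>b<m. cnj (B (\<sigma> i) a b) * B (\<tau> i) a b)"
    by (rule prod_sum_tuples[OF S, symmetric])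
  finally have "fcoeff m B S (basis_op B S \<tau>) \<sigma>
      = (\<Prod>i\<in>S. (1 / of_nat m) * (\<Sum>a<m. \<Sum>b<m. cnj (B (\<sigma> i) a b) * B (\<tau> i) a b))"
    unfolding fcoeff_def by (simp add: prod_dividef)
  also have "\<dots> = (\<Prod>i\<in>S. if \<sigma> i = \<tau> i then 1 else 0)"
    using std_onb_orthonormal[OF onb] tuples_less[OF st(1)] tuples_less[OF st(2)]
    by (intro prod.cong refl) auto
  also have "\<dots> = (if \<sigma> = \<tau> then 1 else 0)"
    using st by (simp add: prod_if_all[OF S] tuples_eq_iff)
  finally show ?thesis .
qed

lemma fourier_expansion:
  assumes S: "finite S" and onb: "std_onb m B" and m: "m > 0"
    and xy: "x' \<in> tuples S m" "y' \<in> tuples S m"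
  shows "(\<Sum>\<sigma>\<in>tuples S (m^2). fcoeff m B S X \<sigma> * basis_op B S \<sigma> x' y') = X x' y'"
proof -
  have "(\<Sum>\<sigma>\<in>tuples S (m^2). fcoeff m B S X \<sigma> * basis_op B S \<sigma> x' y')
     = (1 / of_nat m ^ card S) * (\<Sum>x\<in>tuples S m. \<Sum>y\<in>tuples S m. X x y *
          (\<Sum>\<sigma>\<in>tuples S (m^2). cnj (basis_op B S \<sigma> x y) * basis_op B S \<sigma> x' y'))"
    unfolding fcoeff_def
    by (simp add: sum_distrib_left sum_distrib_right mult_ac sum.swap[where A="tuples S (m^2)"])
  also have "\<dots> = (1 / of_nat m ^ card S) * (\<Sum>x\<in>tuples S m. \<Sum>y\<in>tuples S m.
          if y = y' then (if x = x' then X x y * of_nat m ^ card S else 0) else 0)"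
    using basis_op_complete[OF S onb _ _ xy] by (intro arg_cong2[where f="(*)"] sum.cong refl) auto
  also have "\<dots> = X x' y'"
    using xy S m by (simp add: sum.delta)
  finally show ?thesis .
qed

lemma fcoeff_sum:
  assumes "finite J"
  shows "fcoeff m B S (\<lambda>x y. \<Sum>j\<in>J. f j * X j x y) \<sigma> = (\<Sum>j\<in>J. f j * fcoeff m B S (X j) \<sigma>)"
  unfolding fcoeff_def
  by (simp add: sum_distrib_left sum_distrib_right mult_ac sum.swap[where A=J])

lemma parseval:
  assumes S: "finite S" and onb: "std_onb m B" and m: "m > 0"
  shows "(\<Sum>\<sigma>\<in>tuples S (m^2). (cmod (fcoeff m B S X \<sigma>))\<^sup>2) = norm2sq m S X"
proof -
  define M :: complex where "M = of_nat m ^ card S"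
  have cnj_fcoeff: "cnj (fcoeff m B S X \<sigma>)
      = (1 / M) * (\<Sum>x\<in>tuples S m. \<Sum>y\<in>tuples S m. cnj (X x y) * basis_op B S \<sigma> x y)" for \<sigma>
    unfolding fcoeff_def M_def by (simp add: mult_ac)
  have "complex_of_real (\<Sum>\<sigma>\<in>tuples S (m^2). (cmod (fcoeff m B S X \<sigma>))\<^sup>2)
      = (\<Sum>\<sigma>\<in>tuples S (m^2). fcoeff m B S X \<sigma> * cnj (fcoeff m B S X \<sigma>))"
    unfolding of_real_sum by (intro sum.cong refl) (rule complex_norm_square)
  also have "\<dots> = (1 / M) * (\<Sum>x\<in>tuples S m. \<Sum>y\<in>tuples S m. cnj (X x y) *
        (\<Sum>\<sigma>\<in>tuples S (m^2). fcoeff m B S X \<sigma> * basis_op B S \<sigma> x y))"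
    unfolding cnj_fcoeff
    by (simp add: sum_distrib_left sum_distrib_right mult_ac sum.swap[where A="tuples S (m^2)"])
  also have "\<dots> = (1 / M) * (\<Sum>x\<in>tuples S m. \<Sum>y\<in>tuples S m. cnj (X x y) * X x y)"
    using fourier_expansion[OF S onb m] by (intro arg_cong2[where f="(*)"] sum.cong refl) auto
  also have "\<dots> = (1 / M) * (\<Sum>x\<in>tuples S m. \<Sum>y\<in>tuples S m. complex_of_real ((cmod (X x y))\<^sup>2))"
    by (simp only: complex_norm_square mult.commute)
  also have "\<dots> = complex_of_real (norm2sq m S X)"
    unfolding norm2sq_def M_def of_real_mult of_real_sum by simp
  finally show ?thesis using of_real_eq_iff by blast
qed

lemma fcoeff_low_part:
  assumes S: "finite S" and onb: "std_onb m B" and st: "\<sigma> \<in> tuples S (m^2)"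
  shows "fcoeff m B S (low_part m B S d X) \<sigma> = (if wt S \<sigma> \<le> d then fcoeff m B S X \<sigma> else 0)"
proof -
  let ?L = "{\<sigma>\<in>tuples S (m^2). wt S \<sigma> \<le> d}"
  have "fcoeff m B S (low_part m B S d X) \<sigma>
      = (\<Sum>\<tau>\<in>?L. fcoeff m B S X \<tau> * fcoeff m B S (basis_op B S \<tau>) \<sigma>)"
    unfolding low_part_def using S by (intro fcoeff_sum) auto
  also have "\<dots> = (\<Sum>\<tau>\<in>?L. if \<sigma> = \<tau> then fcoeff m B S X \<tau> else 0)"
    using fcoeff_basis_op[OF S onb st] by (intro sum.cong refl) auto
  also have "\<dots> = (if wt S \<sigma> \<le> d then fcoeff m B S X \<sigma> else 0)"
    using S st by (simp add: sum.delta)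
  finally show ?thesis .
qed

lemma influence_nonneg: "0 \<le> influence m B S X i"
  unfolding influence_def by (intro sum_nonneg) auto

lemma sum_influence:
  assumes S: "finite S"
  shows "(\<Sum>i\<in>S. influence m B S X i)
       = (\<Sum>\<sigma>\<in>tuples S (m^2). real (wt S \<sigma>) * (cmod (fcoeff m B S X \<sigma>))\<^sup>2)"
proof -
  have "(\<Sum>i\<in>S. influence m B S X i)
      = (\<Sum>\<sigma>\<in>tuples S (m^2). \<Sum>i\<in>S. if \<sigma> i \<noteq> 0 then (cmod (fcoeff m B S X \<sigma>))\<^sup>2 else 0)"
    unfolding influence_def using S by (simp add: sum.inter_filter sum.swap[where B="tuples S (m^2)"])
  also have "\<dots> = (\<Sum>\<sigma>\<in>tuples S (m^2). real (wt S \<sigma>) * (cmod (fcoeff m B S X \<sigma>))\<^sup>2)"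
    unfolding wt_def using S by (simp add: sum.inter_filter[symmetric])
  finally show ?thesis .
qed

lemma sum_influence_low_part_le:
  assumes S: "finite S" and onb: "std_onb m B" and m: "m > 0" and X: "norm2sq m S X \<le> 1"
  shows "(\<Sum>i\<in>S. influence m B S (low_part m B S d X) i) \<le> real d"
proof -
  have "(\<Sum>i\<in>S. influence m B S (low_part m B S d X) i)
     = (\<Sum>\<sigma>\<in>tuples S (m^2). real (wt S \<sigma>) * (cmod (if wt S \<sigma> \<le> d then fcoeff m B S X \<sigma> else 0))\<^sup>2)"
    unfolding sum_influence[OF S] using fcoeff_low_part[OF S onb] by (intro sum.cong refl) auto
  also have "\<dots> \<le> (\<Sum>\<sigma>\<in>tuples S (m^2). real d * (cmod (fcoeff m B S X \<sigma>))\<^sup>2)"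
    by (intro sum_mono) (auto intro: mult_right_mono)
  also have "\<dots> = real d * norm2sq m S X"
    by (simp add: sum_distrib_left[symmetric] parseval[OF S onb m])
  also have "\<dots> \<le> real d"
    using X by (simp add: mult_left_le)
  finally show ?thesis .
qed

lemma card_exceeding_le_sum:
  fixes g :: "'a \<Rightarrow> real"
  assumes S: "finite S" and g: "\<And>i. i \<in> S \<Longrightarrow> 0 \<le> g i"
  shows "\<epsilon> * real (card {i\<in>S. \<epsilon> < g i}) \<le> (\<Sum>i\<in>S. g i)"
proof -
  have "\<epsilon> * real (card {i\<in>S. \<epsilon> < g i}) = (\<Sum>i\<in>{i\<in>S. \<epsilon> < g i}. \<epsilon>)"
    by simp
  also have "\<dots> \<le> (\<Sum>i\<in>{i\<in>S. \<epsilon> < g i}. g i)"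
    by (intro sum_mono) auto
  also have "\<dots> \<le> (\<Sum>i\<in>S. g i)"
    using S g by (intro sum_mono2) auto
  finally show ?thesis .
qed

definition influential_registers ::
    "nat \<Rightarrow> (nat \<Rightarrow> mat1) \<Rightarrow> nat set \<Rightarrow> nat \<Rightarrow> real \<Rightarrow> opr \<Rightarrow> nat set" where
  "influential_registers m B S d \<epsilon> X = {i\<in>S. \<epsilon> < influence m B S (low_part m B S d X) i}"

lemma card_influential_registers_le:
  assumes S: "finite S" and onb: "std_onb m B" and m: "m > 0" and X: "norm2sq m S X \<le> 1"
  shows "\<epsilon> * real (card (influential_registers m B S d \<epsilon> X)) \<le> real d"
proof -
  have "\<epsilon> * real (card (influential_registers m B S d \<epsilon> X))
      \<le> (\<Sum>i\<in>S. influence m B S (low_part m B S d X) i)"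
    unfolding influential_registers_def using S by (rule card_exceeding_le_sum) (rule influence_nonneg)
  also have "\<dots> \<le> real d"
    by (rule sum_influence_low_part_le[OF S onb m X])
  finally show ?thesis .
qed

lemma corr_cong:
  assumes "\<And>x y. x \<in> tuples S m \<Longrightarrow> y \<in> tuples S m \<Longrightarrow> P x y = P' x y"
      and "\<And>x y. x \<in> tuples S m \<Longrightarrow> y \<in> tuples S m \<Longrightarrow> Q x y = Q' x y"
  shows "corr m S P Q \<psi> = corr m S P' Q' \<psi>"
  unfolding corr_def using assms by (intro sum.cong refl) auto

lemma corr_sum_left:
  assumes "finite J"
  shows "corr m S (\<lambda>x y. \<Sum>j\<in>J. f j * X j x y) Q \<psi> = (\<Sum>j\<in>J. f j * corr m S (X j) Q \<psi>)"
  unfolding corr_def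
  by (simp add: sum_distrib_left sum_distrib_right mult_ac sum.swap[where A=J])

lemma corr_sum_right:
  assumes "finite J"
  shows "corr m S P (\<lambda>x y. \<Sum>j\<in>J. f j * X j x y) \<psi> = (\<Sum>j\<in>J. f j * corr m S P (X j) \<psi>)"
  unfolding corr_def
  by (simp add: sum_distrib_left sum_distrib_right mult_ac sum.swap[where A=J])

lemma corr_basis_op:
  assumes S: "finite S"
  shows "corr m S (basis_op A S \<alpha>) (basis_op B S \<beta>) \<psi> = (\<Prod>i\<in>S. tr2 m (A (\<alpha> i)) (B (\<beta> i)) \<psi>)"
proof -
  have "(\<Prod>i\<in>S. tr2 m (A (\<alpha> i)) (B (\<beta> i)) \<psi>) =
     (\<Sum>x\<in>tuples S m. \<Prod>i\<in>S. \<Sum>a'<m. \<Sum>b<m. \<Sum>b'<m.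
        A (\<alpha> i) (x i) a' * B (\<beta> i) b b' * \<psi> (a', b') (x i, b))"
    unfolding tr2_def by (rule prod_sum_tuples[OF S])
  also have "\<dots> = (\<Sum>x\<in>tuples S m. \<Sum>x'\<in>tuples S m. \<Prod>i\<in>S. \<Sum>b<m. \<Sum>b'<m.
        A (\<alpha> i) (x i) (x' i) * B (\<beta> i) b b' * \<psi> (x' i, b') (x i, b))"
    by (intro sum.cong refl prod_sum_tuples[OF S])
  also have "\<dots> = (\<Sum>x\<in>tuples S m. \<Sum>x'\<in>tuples S m. \<Sum>y\<in>tuples S m. \<Prod>i\<in>S. \<Sum>b'<m.
        A (\<alpha> i) (x i) (x' i) * B (\<beta> i) (y i) b' * \<psi> (x' i, b') (x i, y i))"
    by (intro sum.cong refl prod_sum_tuples[OF S])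
  also have "\<dots> = (\<Sum>x\<in>tuples S m. \<Sum>x'\<in>tuples S m. \<Sum>y\<in>tuples S m. \<Sum>y'\<in>tuples S m. \<Prod>i\<in>S.
        A (\<alpha> i) (x i) (x' i) * B (\<beta> i) (y i) (y' i) * \<psi> (x' i, y' i) (x i, y i))"
    by (intro sum.cong refl prod_sum_tuples[OF S])
  also have "\<dots> = corr m S (basis_op A S \<alpha>) (basis_op B S \<beta>) \<psi>"
    unfolding corr_def basis_op_def by (simp add: prod.distrib)
  finally show ?thesis by simp
qed

lemma corr_basis_op_diagonal:
  assumes S: "finite S"
    and diag: "\<forall>i<m^2. \<forall>j<m^2. tr2 m (A i) (B j) \<psi> = (if i = j then complex_of_real (c i) else 0)"
    and st: "\<sigma> \<in> tuples S (m^2)" "\<tau> \<in> tuples S (m^2)"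
  shows "corr m S (basis_op A S \<sigma>) (basis_op B S \<tau>) \<psi>
       = (if \<sigma> = \<tau> then complex_of_real (\<Prod>i\<in>S. c (\<sigma> i)) else 0)"
proof -
  have "corr m S (basis_op A S \<sigma>) (basis_op B S \<tau>) \<psi>
      = (\<Prod>i\<in>S. if \<sigma> i = \<tau> i then complex_of_real (c (\<sigma> i)) else 0)"
    unfolding corr_basis_op[OF S] using diag tuples_less[OF st(1)] tuples_less[OF st(2)]
    by (intro prod.cong refl) auto
  then show ?thesis
    using st by (simp add: prod_if_all[OF S] tuples_eq_iff)
qed

lemma corr_basis_expansions:
  assumes S: "finite S" and J: "finite J"
    and diag: "\<forall>i<m^2. \<forall>j<m^2. tr2 m (A i) (B j) \<psi> = (if i = j then complex_of_real (c i) else 0)"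
    and \<phi>: "\<And>j. j \<in> J \<Longrightarrow> \<phi> j \<in> tuples S (m^2)" and inj: "inj_on \<phi> J"
  shows "corr m S (\<lambda>x y. \<Sum>j\<in>J. f j * basis_op A S (\<phi> j) x y)
                  (\<lambda>x y. \<Sum>k\<in>J. g k * basis_op B S (\<phi> k) x y) \<psi>
       = (\<Sum>j\<in>J. f j * g j * complex_of_real (\<Prod>i\<in>S. c (\<phi> j i)))"
proof -
  have "corr m S (\<lambda>x y. \<Sum>j\<in>J. f j * basis_op A S (\<phi> j) x y)
                 (\<lambda>x y. \<Sum>k\<in>J. g k * basis_op B S (\<phi> k) x y) \<psi>
      = (\<Sum>j\<in>J. f j * (\<Sum>k\<in>J. g k * corr m S (basis_op A S (\<phi> j)) (basis_op B S (\<phi> k)) \<psi>))"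
    by (simp add: corr_sum_left[OF J] corr_sum_right[OF J])
  also have "\<dots> = (\<Sum>j\<in>J. f j * (\<Sum>k\<in>J. if j = k then g j * complex_of_real (\<Prod>i\<in>S. c (\<phi> j i)) else 0))"
    using corr_basis_op_diagonal[OF S diag \<phi> \<phi>] inj_on_eq_iff[OF inj]
    by (intro sum.cong refl arg_cong2[where f="(*)"]) auto
  also have "\<dots> = (\<Sum>j\<in>J. f j * g j * complex_of_real (\<Prod>i\<in>S. c (\<phi> j i)))"
    using J by (simp add: mult.assoc)
  finally show ?thesis .
qed

lemma corr_fourier:
  assumes S: "finite S" and onb: "std_onb m A" "std_onb m B" and m: "m > 0"
    and diag: "\<forall>i<m^2. \<forall>j<m^2. tr2 m (A i) (B j) \<psi> = (if i = j then complex_of_real (c i) else 0)"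
  shows "corr m S P Q \<psi> = (\<Sum>\<tau>\<in>tuples S (m^2).
      fcoeff m A S P \<tau> * fcoeff m B S Q \<tau> * complex_of_real (\<Prod>i\<in>S. c (\<tau> i)))"
proof -
  have "corr m S P Q \<psi> = corr m S
      (\<lambda>x y. \<Sum>\<tau>\<in>tuples S (m^2). fcoeff m A S P \<tau> * basis_op A S (id \<tau>) x y)
      (\<lambda>x y. \<Sum>\<tau>\<in>tuples S (m^2). fcoeff m B S Q \<tau> * basis_op B S (id \<tau>) x y) \<psi>"
    using fourier_expansion[OF S onb(1) m] fourier_expansion[OF S onb(2) m]
    by (intro corr_cong) auto
  also have "\<dots> = (\<Sum>\<tau>\<in>tuples S (m^2).
      fcoeff m A S P \<tau> * fcoeff m B S Q \<tau> * complex_of_real (\<Prod>i\<in>S. c (id \<tau> i)))"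
    using S by (intro corr_basis_expansions[OF S _ diag]) auto
  finally show ?thesis by simp
qed

lemma inj_on_restrict_complement:
  "inj_on (\<lambda>\<tau>. restrict \<tau> (N - H)) {\<tau>\<in>tuples N k. restrict \<tau> H = \<sigma>}"
proof (rule inj_onI)
  fix \<tau> \<tau>'
  assume "\<tau> \<in> {\<tau>\<in>tuples N k. restrict \<tau> H = \<sigma>}" "\<tau>' \<in> {\<tau>\<in>tuples N k. restrict \<tau> H = \<sigma>}"
    and eq: "restrict \<tau> (N - H) = restrict \<tau>' (N - H)"
  then have "restrict \<tau> H = restrict \<tau>' H" "\<tau> \<in> extensional N" "\<tau>' \<in> extensional N"
    by (auto simp: tuples_def PiE_def)
  with eq show "\<tau> = \<tau>'"
    by (intro ext) (metis Diff_iff extensional_arb restrict_apply')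
qed

lemma corr_part_op:
  assumes H: "H \<subseteq> {..<n}"
    and diag: "\<forall>i<m^2. \<forall>j<m^2. tr2 m (A i) (B j) \<psi> = (if i = j then complex_of_real (c i) else 0)"
  shows "complex_of_real (\<Prod>i\<in>H. c (\<sigma> i)) *
      corr m ({..<n} - H) (part_op m A n H P \<sigma>) (part_op m B n H Q \<sigma>) \<psi>
    = (\<Sum>\<tau>\<in>{\<tau>\<in>tuples {..<n} (m^2). restrict \<tau> H = \<sigma>}.
      fcoeff m A {..<n} P \<tau> * fcoeff m B {..<n} Q \<tau> * complex_of_real (\<Prod>i<n. c (\<tau> i)))"
proof -
  let ?J = "{\<tau>\<in>tuples {..<n} (m^2). restrict \<tau> H = \<sigma>}"
  have "corr m ({..<n} - H) (part_op m A n H P \<sigma>) (part_op m B n H Q \<sigma>) \<psi>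
      = (\<Sum>\<tau>\<in>?J. fcoeff m A {..<n} P \<tau> * fcoeff m B {..<n} Q \<tau>
                   * complex_of_real (\<Prod>i\<in>{..<n} - H. c (restrict \<tau> ({..<n} - H) i)))"
    unfolding part_op_def
    by (rule corr_basis_expansions[OF _ _ diag _ inj_on_restrict_complement])
       (auto intro: restrict_in_tuples)
  also have "\<dots> = (\<Sum>\<tau>\<in>?J. fcoeff m A {..<n} P \<tau> * fcoeff m B {..<n} Q \<tau>
                   * complex_of_real (\<Prod>i\<in>{..<n} - H. c (\<tau> i)))"
    by (intro sum.cong refl arg_cong2[where f="(*)"] arg_cong[where f=complex_of_real] prod.cong) auto
  finally have corr: "corr m ({..<n} - H) (part_op m A n H P \<sigma>) (part_op m B n H Q \<sigma>) \<psi> = \<dots>" .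
  have split: "complex_of_real (\<Prod>i\<in>H. c (\<sigma> i)) * complex_of_real (\<Prod>i\<in>{..<n} - H. c (\<tau> i))
      = complex_of_real (\<Prod>i<n. c (\<tau> i))" if "\<tau> \<in> ?J" for \<tau>
  proof -
    have "(\<Prod>i\<in>H. c (\<sigma> i)) = (\<Prod>i\<in>H. c (\<tau> i))"
      using that by (auto intro!: prod.cong)
    then show ?thesis
      using prod.subset_diff[OF H, of "\<lambda>i. c (\<tau> i)"] by (simp only: mult.commute flip: of_real_mult) simp
  qed
  show ?thesis
    unfolding corr sum_distrib_left
    by (intro sum.cong refl) (subst split[symmetric], assumption, simp only: mult_ac)
qed

lemma corr_split_registers:
  assumes H: "H \<subseteq> {..<n}" and onb: "std_onb m A" "std_onb m B" and m: "m > 0"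
    and diag: "\<forall>i<m^2. \<forall>j<m^2. tr2 m (A i) (B j) \<psi> = (if i = j then complex_of_real (c i) else 0)"
  shows "corr m {..<n} P Q \<psi> =
      (\<Sum>\<sigma>\<in>tuples H (m^2). complex_of_real (\<Prod>i\<in>H. c (\<sigma> i)) *
          corr m ({..<n} - H) (part_op m A n H P \<sigma>) (part_op m B n H Q \<sigma>) \<psi>)"
proof -
  let ?F = "\<lambda>\<tau>. fcoeff m A {..<n} P \<tau> * fcoeff m B {..<n} Q \<tau> * complex_of_real (\<Prod>i<n. c (\<tau> i))"
  have "(\<Sum>\<sigma>\<in>tuples H (m^2). complex_of_real (\<Prod>i\<in>H. c (\<sigma> i)) *
          corr m ({..<n} - H) (part_op m A n H P \<sigma>) (part_op m B n H Q \<sigma>) \<psi>)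
      = (\<Sum>\<sigma>\<in>tuples H (m^2). \<Sum>\<tau>\<in>{\<tau>\<in>tuples {..<n} (m^2). restrict \<tau> H = \<sigma>}. ?F \<tau>)"
    by (intro sum.cong refl corr_part_op[OF H diag])
  also have "\<dots> = (\<Sum>\<tau>\<in>tuples {..<n} (m^2). ?F \<tau>)"
    using H finite_subset[OF H] by (intro sum.group) (auto intro: restrict_in_tuples)
  also have "\<dots> = corr m {..<n} P Q \<psi>"
    by (simp add: corr_fourier[OF _ onb m diag])
  finally show ?thesis ..
qed

theorem lemma7p4:
  fixes m n d :: nat and \<delta> \<epsilon> :: real and \<psi> :: state2 and P Q :: opr
    and A B :: "nat \<Rightarrow> mat1" and c :: "nat \<Rightarrow> real"
  assumes "0 \<le> \<delta>" "\<delta> < 1" "0 \<le> \<epsilon>" "\<epsilon> < 1" "n > 0" "m > 1"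
    and "noisy_mes m \<psi>"
    and "herm_op m {..<n} P" "herm_op m {..<n} Q"
    and "norm2sq m {..<n} P \<le> 1" "norm2sq m {..<n} Q \<le> 1"
    and "norm2sq m {..<n} (high_part m A {..<n} d P) \<le> \<delta>"
    and "norm2sq m {..<n} (high_part m B {..<n} d Q) \<le> \<delta>"
    and "std_onb m A" "std_onb m B"
    and "\<forall>i<m^2. \<forall>j<m^2. tr2 m (A i) (B j) \<psi> = (if i = j then complex_of_real (c i) else 0)"
    and "\<forall>i j. i \<le> j \<longrightarrow> j < m^2 \<longrightarrow> c j \<le> c i"
    and "\<forall>i<m^2. 0 \<le> c i"
  shows "\<exists>H \<subseteq> {..<n}. \<epsilon> * real (card H) \<le> 2 * real d \<and>
    (\<forall>i\<in>{..<n} - H. influence m A {..<n} (low_part m A {..<n} d P) i \<le> \<epsilon> \<and>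
                     influence m B {..<n} (low_part m B {..<n} d Q) i \<le> \<epsilon>) \<and>
    corr m {..<n} P Q \<psi> =
      (\<Sum>\<sigma>\<in>tuples H (m^2). complex_of_real (\<Prod>i\<in>H. c (\<sigma> i)) *
          corr m ({..<n} - H) (part_op m A n H P \<sigma>) (part_op m B n H Q \<sigma>) \<psi>)"
proof -
  have m: "m > 0" using \<open>m > 1\<close> by simp
  let ?IA = "influential_registers m A {..<n} d \<epsilon> P"
  let ?IB = "influential_registers m B {..<n} d \<epsilon> Q"
  have "\<epsilon> * real (card (?IA \<union> ?IB)) \<le> \<epsilon> * real (card ?IA) + \<epsilon> * real (card ?IB)"
    using \<open>0 \<le> \<epsilon>\<close> card_Un_le by (metis distrib_left mult_left_mono of_nat_add of_nat_le_iff)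
  also have "\<dots> \<le> 2 * real d"
    using card_influential_registers_le[OF _ assms(14) m assms(10), of \<epsilon> d]
      card_influential_registers_le[OF _ assms(15) m assms(11), of \<epsilon> d] by simp
  finally have "\<epsilon> * real (card (?IA \<union> ?IB)) \<le> 2 * real d" .
  moreover have "?IA \<union> ?IB \<subseteq> {..<n}"
    by (auto simp: influential_registers_def)
  ultimately show ?thesis
    using corr_split_registers[OF _ assms(14,15) m assms(16)]
    by (intro exI[of _ "?IA \<union> ?IB"]) (auto simp: influential_registers_def)
qed

end
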